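(* Let $t_n=n(n+1)/2$. There exists a rational parametric solution of the system \[ t_{x}+t_{y}=t_{p},\quad t_{y}+t_{z}=t_{q},\quad t_{z}+t_{x}=t_{r} \] depending on three parameters; that is, there exist rational functions $x,y,z,p,q,r\in\mathbb{Q}(u,v,w)$ in three independent indeterminates $u,v,w$ which satisfy the system identically in $\mathbb{Q}(u,v,w)$ and such that the field $\mathbb{Q}(x,y,z,p,q,r)$ has transcendence degree $3$ over $\mathbb{Q}$.
   Context: Here $t_n=n(n+1)/2$ is extended to arguments in any field of characteristic $0$ by the same formula. *)

theory Defs
  imports "HOL-Computational_Algebra.Polynomial" "HOL-Computational_Algebra.Fraction_Field"
begin

type_synonym ratfun3 = "rat poly poly poly fract"

definition var_u :: ratfun3 where "var_u = Fract [:[:[:0, 1:]:]:] 1"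
definition var_v :: ratfun3 where "var_v = Fract [:[:0, 1:]:] 1"
definition var_w :: ratfun3 where "var_w = Fract [:0, 1:] 1"

definition ratK :: "rat \<Rightarrow> ratfun3" where "ratK c = Fract [:[:[:c:]:]:] 1"

definition tri :: "'a::field \<Rightarrow> 'a" where "tri n = n * (n + 1) / 2"

definition is_subfield :: "ratfun3 set \<Rightarrow> bool" where
  "is_subfield F \<longleftrightarrow> 0 \<in> F \<and> 1 \<in> F \<and> (\<forall>a\<in>F. \<forall>b\<in>F. a + b \<in> F \<and> a - b \<in> F \<and> a * b \<in> F)
     \<and> (\<forall>a\<in>F. inverse a \<in> F)"

definition gen_subfield :: "ratfun3 set \<Rightarrow> ratfun3 set" where
  "gen_subfield S = \<Inter>{F. is_subfield F \<and> S \<subseteq> F}"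

text \<open>A polynomial is a finitely supported
  coefficient function on exponent vectors (lists of length k).\<close>
definition alg_indep :: "ratfun3 list \<Rightarrow> bool" where
  "alg_indep as \<longleftrightarrow>
     (\<forall>(c :: nat list \<Rightarrow> rat) E. finite E \<and> (\<forall>e\<in>E. length e = length as) \<and>
        (\<Sum>e\<in>E. ratK (c e) * (\<Prod>i<length as. (as ! i) ^ (e ! i))) = 0
        \<longrightarrow> (\<forall>e\<in>E. c e = 0))"

definition trdeg_eq :: "ratfun3 set \<Rightarrow> nat \<Rightarrow> bool" where
  "trdeg_eq F n \<longleftrightarrow>
     (\<exists>as. length as = n \<and> set as \<subseteq> F \<and> alg_indep as) \<and>
     (\<forall>as. set as \<subseteq> F \<and> alg_indep as \<longrightarrow> length as \<le> n)"

end

theory Submission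
  imports Defs
begin

text \<open>With \<open>X = 2x + 1\<close> one has \<open>t\<^sub>x = (X\<^sup>2 - 1)/8\<close>, so the system becomes
  \<open>X\<^sup>2 + Y\<^sup>2 = P\<^sup>2 + 1\<close>, \<open>Y\<^sup>2 + Z\<^sup>2 = Q\<^sup>2 + 1\<close>, \<open>Z\<^sup>2 + X\<^sup>2 = R\<^sup>2 + 1\<close>.
  The first and third quadrics are parametrised by \<open>P = X + u(Y - 1)\<close> and \<open>R = X + v(Z - 1)\<close>,
  which makes \<open>Y\<close> and \<open>Z\<close> affine in \<open>X\<close>; the middle equation then becomes a conic in
  \<open>X\<close> and \<open>Q\<close> with the known point \<open>X = 1/u\<close>, \<open>Q = Z\<close>, and the secant of slope \<open>w\<close> through
  it gives a second point. Conversely \<open>u\<close>, \<open>v\<close>, \<open>w\<close> are rational in the solution, so the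
  solution generates all of \<open>\<rat>(u,v,w)\<close>, whose transcendence degree is \<open>3\<close>: the variables
  are independent, and four elements always satisfy a relation because there are more
  monomials of degree at most \<open>N\<close> in each of them, namely \<open>(N + 1)\<^sup>4\<close>, than the \<open>O(N\<^sup>3)\<close>
  coefficients available to their numerators over a common denominator.\<close>

section \<open>An explicit solution over any field\<close>

definition half_pred :: "'a::field \<Rightarrow> 'a" where "half_pred X = (X - 1) / 2"

lemma tri_half_pred: "tri (half_pred X) = (X\<^sup>2 - 1) / (8::'a::field_char_0)"
  unfolding tri_def half_pred_def by (simp add: field_simps power2_eq_square)

text \<open>\<open>P = X + m(Y - 1)\<close> on \<open>X\<^sup>2 + Y\<^sup>2 = P\<^sup>2 + 1\<close> forces
  \<open>Y = conic_slope m * X + conic_offset m\<close>.\<close>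
definition conic_slope :: "'a::field \<Rightarrow> 'a" where "conic_slope m = 2 * m / (1 - m\<^sup>2)"
definition conic_offset :: "'a::field \<Rightarrow> 'a" where "conic_offset m = - (1 + m\<^sup>2) / (1 - m\<^sup>2)"

definition base_Z :: "'a::field \<Rightarrow> 'a \<Rightarrow> 'a" where
  "base_Z m n = conic_slope n / m + conic_offset n"
definition secant_den :: "'a::field \<Rightarrow> 'a \<Rightarrow> 'a \<Rightarrow> 'a" where
  "secant_den m n k = conic_slope m ^ 2 + conic_slope n ^ 2 - k ^ 2"
definition secant_num :: "'a::field \<Rightarrow> 'a \<Rightarrow> 'a \<Rightarrow> 'a" where
  "secant_num m n k = base_Z m n * k - conic_slope m - base_Z m n * conic_slope n"
definition secant_param :: "'a::field \<Rightarrow> 'a \<Rightarrow> 'a \<Rightarrow> 'a" where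
  "secant_param m n k = 2 * secant_num m n k / secant_den m n k"

text \<open>The solution is \<open>X = 1/m + s\<close> with \<open>s = secant_param m n k\<close>; \<open>s = 0\<close> is the base point
  \<open>(X, Y, Z, Q) = (1/m, 1, base_Z m n, base_Z m n)\<close>.\<close>
definition sol_X :: "'a::field \<Rightarrow> 'a \<Rightarrow> 'a \<Rightarrow> 'a" where
  "sol_X m n k = 1 / m + secant_param m n k"
definition sol_Y :: "'a::field \<Rightarrow> 'a \<Rightarrow> 'a \<Rightarrow> 'a" where
  "sol_Y m n k = 1 + conic_slope m * secant_param m n k"
definition sol_Z :: "'a::field \<Rightarrow> 'a \<Rightarrow> 'a \<Rightarrow> 'a" where
  "sol_Z m n k = base_Z m n + conic_slope n * secant_param m n k"
definition sol_P :: "'a::field \<Rightarrow> 'a \<Rightarrow> 'a \<Rightarrow> 'a" where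
  "sol_P m n k = sol_X m n k + m * (sol_Y m n k - 1)"
definition sol_Q :: "'a::field \<Rightarrow> 'a \<Rightarrow> 'a \<Rightarrow> 'a" where
  "sol_Q m n k = base_Z m n + k * secant_param m n k"
definition sol_R :: "'a::field \<Rightarrow> 'a \<Rightarrow> 'a \<Rightarrow> 'a" where
  "sol_R m n k = sol_X m n k + n * (sol_Z m n k - 1)"

lemma conic_slope_cleared: "1 - m\<^sup>2 \<noteq> 0 \<Longrightarrow> conic_slope m * (1 - m\<^sup>2) = 2 * m"
  unfolding conic_slope_def by simp

lemma conic_offset_cleared: "1 - m\<^sup>2 \<noteq> 0 \<Longrightarrow> conic_offset m * (1 - m\<^sup>2) = - (1 + m\<^sup>2)"
  unfolding conic_offset_def by simp

lemma sol_Y_affine: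
  fixes m :: "'a::field_char_0"
  assumes "m \<noteq> 0" "1 - m\<^sup>2 \<noteq> 0"
  shows "sol_Y m n k = conic_slope m * sol_X m n k + conic_offset m"
proof -
  have "m * (1 / m) = 1" "(1 - m\<^sup>2) * (1 / (1 - m\<^sup>2)) = 1" using assms by simp_all
  then show ?thesis unfolding sol_Y_def sol_X_def
    using conic_slope_cleared[OF assms(2)] conic_offset_cleared[OF assms(2)] by algebra
qed

lemma sol_Z_affine: "sol_Z m n k = conic_slope n * sol_X m n k + conic_offset n"
  unfolding sol_Z_def sol_X_def base_Z_def by (simp add: algebra_simps add_divide_distrib)

lemma sol_XY_eq:
  fixes m :: "'a::field_char_0"
  assumes "m \<noteq> 0" "1 - m\<^sup>2 \<noteq> 0"
  shows "sol_X m n k ^ 2 + sol_Y m n k ^ 2 = sol_P m n k ^ 2 + 1"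
  unfolding sol_P_def using sol_Y_affine[OF assms, of n k] conic_slope_cleared[OF assms(2)]
    conic_offset_cleared[OF assms(2)] by algebra

lemma sol_ZX_eq:
  fixes n :: "'a::field_char_0"
  assumes "1 - n\<^sup>2 \<noteq> 0"
  shows "sol_Z m n k ^ 2 + sol_X m n k ^ 2 = sol_R m n k ^ 2 + 1"
  unfolding sol_R_def using sol_Z_affine[of m n k] conic_slope_cleared[OF assms]
    conic_offset_cleared[OF assms] by algebra

lemma sol_YZ_eq:
  fixes m :: "'a::field_char_0"
  assumes "secant_den m n k \<noteq> 0"
  shows "sol_Y m n k ^ 2 + sol_Z m n k ^ 2 = sol_Q m n k ^ 2 + 1"
proof -
  have "secant_param m n k * secant_den m n k = 2 * secant_num m n k"
    unfolding secant_param_def using assms by simp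
  then show ?thesis unfolding sol_Y_def sol_Z_def sol_Q_def secant_den_def secant_num_def
    by algebra
qed

section \<open>Certifying non-zero rational functions by evaluation\<close>

text \<open>The outermost variable is \<open>w\<close> and the innermost \<open>u\<close>, so this evaluates at
  \<open>(u, v, w) = (2, 3, 5)\<close>.\<close>
definition eval235 :: "rat poly poly poly \<Rightarrow> rat" where
  "eval235 p = poly (poly (poly p [:[:5:]:]) [:3:]) 2"

lemma eval235_simps [simp]:
  "eval235 (p + q) = eval235 p + eval235 q" "eval235 (p * q) = eval235 p * eval235 q"
  "eval235 (- p) = - eval235 p" "eval235 (p - q) = eval235 p - eval235 q"
  "eval235 1 = 1" "eval235 0 = 0"
  by (simp_all add: eval235_def)

text \<open>A relation rather than a function: evaluation is only defined for representatives
  whose denominator does not vanish at the point.\<close>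
definition takes_value :: "ratfun3 \<Rightarrow> rat \<Rightarrow> bool" where
  "takes_value e q \<longleftrightarrow> (\<exists>a b. e = Fract a b \<and> eval235 b \<noteq> 0 \<and> q = eval235 a / eval235 b)"

lemma takes_value_add: "takes_value e q \<Longrightarrow> takes_value f r \<Longrightarrow> takes_value (e + f) (q + r)"
  unfolding takes_value_def
proof (elim exE conjE)
  fix a b c d assume "e = Fract a b" "eval235 b \<noteq> 0" "q = eval235 a / eval235 b"
    "f = Fract c d" "eval235 d \<noteq> 0" "r = eval235 c / eval235 d"
  moreover from this have "b \<noteq> 0" "d \<noteq> 0" by auto
  ultimately show "\<exists>a b. e + f = Fract a b \<and> eval235 b \<noteq> 0 \<and> q + r = eval235 a / eval235 b"
    by (intro exI[of _ "a * d + c * b"] exI[of _ "b * d"]) (simp add: field_simps)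
qed

lemma takes_value_mult: "takes_value e q \<Longrightarrow> takes_value f r \<Longrightarrow> takes_value (e * f) (q * r)"
  unfolding takes_value_def
proof (elim exE conjE)
  fix a b c d assume "e = Fract a b" "eval235 b \<noteq> 0" "q = eval235 a / eval235 b"
    "f = Fract c d" "eval235 d \<noteq> 0" "r = eval235 c / eval235 d"
  then show "\<exists>a b. e * f = Fract a b \<and> eval235 b \<noteq> 0 \<and> q * r = eval235 a / eval235 b"
    by (intro exI[of _ "a * c"] exI[of _ "b * d"]) simp
qed

lemma takes_value_minus: "takes_value e q \<Longrightarrow> takes_value (- e) (- q)"
  unfolding takes_value_def by (metis eval235_simps(3) minus_divide_left minus_fract)

lemma takes_value_diff: "takes_value e q \<Longrightarrow> takes_value f r \<Longrightarrow> takes_value (e - f) (q - r)"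
  using takes_value_add[OF _ takes_value_minus, of e q f r] by simp

lemma takes_value_inverse: "takes_value e q \<Longrightarrow> q \<noteq> 0 \<Longrightarrow> takes_value (inverse e) (inverse q)"
  unfolding takes_value_def
proof (elim exE conjE)
  fix a b assume ab: "e = Fract a b" "eval235 b \<noteq> 0" "q = eval235 a / eval235 b" and "q \<noteq> 0"
  then have "eval235 a \<noteq> 0" by auto
  with ab show "\<exists>a b. inverse e = Fract a b \<and> eval235 b \<noteq> 0 \<and> inverse q = eval235 a / eval235 b"
    by (intro exI[of _ b] exI[of _ a]) simp
qed

lemma takes_value_divide:
  "takes_value e q \<Longrightarrow> takes_value f r \<Longrightarrow> r \<noteq> 0 \<Longrightarrow> takes_value (e / f) (q / r)"
  using takes_value_mult[OF _ takes_value_inverse] by (simp add: divide_inverse)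

lemma takes_value_one: "takes_value 1 1"
  unfolding takes_value_def by (intro exI[of _ 1]) (simp add: One_fract_def)

lemma takes_value_power: "takes_value e q \<Longrightarrow> takes_value (e ^ n) (q ^ n)"
  by (induction n) (simp_all add: takes_value_one takes_value_mult)

lemma takes_value_numeral: "takes_value (numeral k) (numeral k)"
proof (induction k)
  case One then show ?case using takes_value_one by simp
next
  case (Bit0 k) then show ?case using takes_value_add[OF Bit0 Bit0] by (simp add: numeral_Bit0)
next
  case (Bit1 k) then show ?case
    using takes_value_add[OF takes_value_add[OF Bit1 Bit1] takes_value_one] by (simp add: numeral_Bit1)
qed

lemma takes_value_vars: "takes_value var_u 2" "takes_value var_v 3" "takes_value var_w 5"
  unfolding takes_value_def var_u_def var_v_def var_w_def
  by (intro exI[of _ 1] exI conjI, rule refl, simp_all add: eval235_def)+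

lemma nonzero_if_takes_value: "takes_value e q \<Longrightarrow> q \<noteq> 0 \<Longrightarrow> e \<noteq> 0"
  unfolding takes_value_def
proof (elim exE conjE)
  fix a b assume "e = Fract a b" "eval235 b \<noteq> 0" "q = eval235 a / eval235 b" "q \<noteq> 0"
  moreover from this have "b \<noteq> 0" "a \<noteq> 0" by auto
  ultimately show "e \<noteq> 0" by (simp add: Zero_fract_def eq_fract)
qed

lemmas takes_value_intros = takes_value_one takes_value_add takes_value_diff takes_value_mult
  takes_value_minus takes_value_divide takes_value_power takes_value_numeral takes_value_vars

abbreviation "X_uvw \<equiv> sol_X var_u var_v var_w"
abbreviation "Y_uvw \<equiv> sol_Y var_u var_v var_w"
abbreviation "Z_uvw \<equiv> sol_Z var_u var_v var_w"
abbreviation "P_uvw \<equiv> sol_P var_u var_v var_w"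
abbreviation "Q_uvw \<equiv> sol_Q var_u var_v var_w"
abbreviation "R_uvw \<equiv> sol_R var_u var_v var_w"

lemma var_u_nonzero: "var_u \<noteq> 0"
  by (rule nonzero_if_takes_value[OF takes_value_vars(1)]) simp

lemma one_minus_var_u_sq_nonzero: "1 - var_u\<^sup>2 \<noteq> 0"
  by (rule nonzero_if_takes_value, (rule takes_value_intros | simp add: power2_eq_square)+)

lemma one_minus_var_v_sq_nonzero: "1 - var_v\<^sup>2 \<noteq> 0"
  by (rule nonzero_if_takes_value, (rule takes_value_intros | simp add: power2_eq_square)+)

lemma secant_den_uvw_nonzero: "secant_den var_u var_v var_w \<noteq> 0"
  unfolding secant_den_def conic_slope_def
  by (rule nonzero_if_takes_value, (rule takes_value_intros | simp add: power2_eq_square)+)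

lemma secant_param_uvw_nonzero: "secant_param var_u var_v var_w \<noteq> 0"
  unfolding secant_param_def secant_den_def secant_num_def base_Z_def conic_slope_def
    conic_offset_def
  by (rule nonzero_if_takes_value, (rule takes_value_intros | simp add: power2_eq_square)+)

lemma Y_uvw_ne_1: "Y_uvw - 1 \<noteq> 0"
  unfolding sol_Y_def secant_param_def secant_den_def secant_num_def base_Z_def conic_slope_def
    conic_offset_def
  by (rule nonzero_if_takes_value, (rule takes_value_intros | simp add: power2_eq_square)+)

lemma Z_uvw_ne_1: "Z_uvw - 1 \<noteq> 0"
  unfolding sol_Z_def secant_param_def secant_den_def secant_num_def base_Z_def conic_slope_def
    conic_offset_def
  by (rule nonzero_if_takes_value, (rule takes_value_intros | simp add: power2_eq_square)+)

lemma tri_system_uvw: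
  "tri (half_pred X_uvw) + tri (half_pred Y_uvw) = tri (half_pred P_uvw)"
  "tri (half_pred Y_uvw) + tri (half_pred Z_uvw) = tri (half_pred Q_uvw)"
  "tri (half_pred Z_uvw) + tri (half_pred X_uvw) = tri (half_pred R_uvw)"
  unfolding tri_half_pred
  using sol_XY_eq[OF var_u_nonzero one_minus_var_u_sq_nonzero, of var_v var_w]
    sol_YZ_eq[OF secant_den_uvw_nonzero] sol_ZX_eq[OF one_minus_var_v_sq_nonzero, of var_u var_w]
  by (simp_all add: field_simps)

section \<open>The solution generates \<open>\<rat>(u,v,w)\<close>\<close>

lemma is_subfield_gen_subfield: "is_subfield (gen_subfield S)"
  unfolding is_subfield_def gen_subfield_def by auto

lemma subset_gen_subfield: "S \<subseteq> gen_subfield S"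
  unfolding gen_subfield_def by auto

context
  fixes F assumes F: "is_subfield F"
begin

lemma subfield_one: "1 \<in> F"
  using F unfolding is_subfield_def by auto

lemma subfield_add: "a \<in> F \<Longrightarrow> b \<in> F \<Longrightarrow> a + b \<in> F"
  using F unfolding is_subfield_def by auto

lemma subfield_diff: "a \<in> F \<Longrightarrow> b \<in> F \<Longrightarrow> a - b \<in> F"
  using F unfolding is_subfield_def by auto

lemma subfield_mult: "a \<in> F \<Longrightarrow> b \<in> F \<Longrightarrow> a * b \<in> F"
  using F unfolding is_subfield_def by auto

lemma subfield_divide: "a \<in> F \<Longrightarrow> b \<in> F \<Longrightarrow> a / b \<in> F"
  using F subfield_mult unfolding is_subfield_def by (simp add: divide_inverse)

lemma subfield_power: "a \<in> F \<Longrightarrow> a ^ n \<in> F"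
  by (induction n) (auto intro: subfield_one subfield_mult)

lemma subfield_numeral: "numeral k \<in> F"
  by (induction k) (simp_all only: numeral_Bit0 numeral_Bit1 numeral_One subfield_one subfield_add)

lemma subfield_minus: "a \<in> F \<Longrightarrow> - a \<in> F"
  using subfield_diff[of 0 a] F unfolding is_subfield_def by auto

lemma subfield_half_pred_iff: "half_pred a \<in> F \<longleftrightarrow> a \<in> F"
proof
  have "a = 2 * half_pred a + 1" unfolding half_pred_def by (simp add: diff_divide_distrib)
  then show "half_pred a \<in> F \<Longrightarrow> a \<in> F"
    by (metis subfield_add subfield_mult subfield_numeral subfield_one)
qed (auto simp: half_pred_def intro: subfield_diff subfield_divide subfield_one subfield_numeral)

lemmas subfield_intros = subfield_one subfield_add subfield_diff subfield_mult subfield_divide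
  subfield_minus subfield_power subfield_numeral

end

text \<open>\<open>u\<close> and \<open>v\<close> are the slopes of the first and third parametrisations, after which
  \<open>X\<close> gives the secant parameter and \<open>Q\<close> gives \<open>w\<close>.\<close>
lemma vars_in_gen_subfield_solution:
  assumes "{half_pred X_uvw, half_pred Y_uvw, half_pred Z_uvw,
            half_pred P_uvw, half_pred Q_uvw, half_pred R_uvw} \<subseteq> F"
    and F: "is_subfield F"
  shows "var_u \<in> F" "var_v \<in> F" "var_w \<in> F"
proof -
  have X: "X_uvw \<in> F" and Y: "Y_uvw \<in> F" and Z: "Z_uvw \<in> F"
    and P: "P_uvw \<in> F" and Q: "Q_uvw \<in> F" and R: "R_uvw \<in> F"
    using assms(1) subfield_half_pred_iff[OF F] by auto
  have "var_u = (P_uvw - X_uvw) / (Y_uvw - 1)" unfolding sol_P_def using Y_uvw_ne_1 by simp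
  then show u: "var_u \<in> F" using P X Y subfield_intros[OF F] by metis
  have "var_v = (R_uvw - X_uvw) / (Z_uvw - 1)" unfolding sol_R_def using Z_uvw_ne_1 by simp
  then show v: "var_v \<in> F" using R X Z subfield_intros[OF F] by metis
  have "secant_param var_u var_v var_w = X_uvw - 1 / var_u" unfolding sol_X_def by simp
  then have s: "secant_param var_u var_v var_w \<in> F" using X u subfield_intros[OF F] by metis
  have b: "base_Z var_u var_v \<in> F"
    unfolding base_Z_def conic_slope_def conic_offset_def using u v by (intro subfield_intros[OF F])
  have "var_w = (Q_uvw - base_Z var_u var_v) / secant_param var_u var_v var_w"
    unfolding sol_Q_def using secant_param_uvw_nonzero by simp
  then show "var_w \<in> F" using Q b s subfield_intros[OF F] by metis
qed

section \<open>Algebraic independence of \<open>u\<close>, \<open>v\<close>, \<open>w\<close>\<close>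

definition coeff3 :: "'a::zero poly poly poly \<Rightarrow> nat \<Rightarrow> nat \<Rightarrow> nat \<Rightarrow> 'a" where
  "coeff3 p i j k = coeff (coeff (coeff p i) j) k"

lemma coeff3_sum: "coeff3 (sum f A) i j k = (\<Sum>x\<in>A. coeff3 (f x) i j k)"
  unfolding coeff3_def by (simp add: coeff_sum)

lemma coeff3_smult_const: "coeff3 ([:[:[:c:]:]:] * p) i j k = c * coeff3 p i j k"
  unfolding coeff3_def by simp

definition monom3 :: "nat \<Rightarrow> nat \<Rightarrow> nat \<Rightarrow> rat poly poly poly" where
  "monom3 a b c = monom (monom (monom 1 a) b) c"

lemma monom3_mult: "monom3 a b c * monom3 a' b' c' = monom3 (a + a') (b + b') (c + c')"
  unfolding monom3_def by (simp add: mult_monom)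

lemma monom3_power: "monom3 a b c ^ n = monom3 (n * a) (n * b) (n * c)"
  by (induction n) (simp_all add: monom3_mult, simp add: monom3_def monom_0 one_pCons)

lemma vars_eq_monom3:
  "var_u = Fract (monom3 1 0 0) 1" "var_v = Fract (monom3 0 1 0) 1" "var_w = Fract (monom3 0 0 1) 1"
  unfolding var_u_def var_v_def var_w_def monom3_def
  by (simp_all add: monom_0 monom_Suc one_pCons[symmetric])

lemma coeff3_smult_monom3:
  "coeff3 ([:[:[:r:]:]:] * monom3 a b c) k j i = (if a = i \<and> b = j \<and> c = k then r else 0)"
  unfolding coeff3_smult_const by (simp add: coeff3_def monom3_def)

lemma Fract_power: "Fract a b ^ n = Fract (a ^ n) (b ^ n)"
  by (induction n) (simp_all add: One_fract_def)

lemma Fract_prod: "finite A \<Longrightarrow> (\<Prod>x\<in>A. Fract (a x) (b x)) = Fract (\<Prod>x\<in>A. a x) (\<Prod>x\<in>A. b x)"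
  by (induction A rule: finite_induct) (simp_all add: One_fract_def)

lemma sum_Fract_same_denom:
  assumes "D \<noteq> 0" "finite A"
  shows "(\<Sum>x\<in>A. Fract (f x) D) = Fract (\<Sum>x\<in>A. f x) D"
  using assms(2)
proof (induction A rule: finite_induct)
  case empty then show ?case by (simp add: Zero_fract_def eq_fract(3))
next
  case (insert x A)
  have "Fract (f x) D + Fract (sum f A) D = Fract (D * (f x + sum f A)) (D * D)"
    using assms by (simp add: algebra_simps)
  also have "\<dots> = Fract (f x + sum f A) D" using assms(1) by (rule mult_fract_cancel)
  finally show ?case using insert by simp
qed

lemma Fract_eq_0_iff_numerator: "b \<noteq> 0 \<Longrightarrow> Fract a b = 0 \<longleftrightarrow> a = 0"
  by (simp add: Zero_fract_def eq_fract)

lemma alg_indep_vars: "alg_indep [var_u, var_v, var_w]"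
  unfolding alg_indep_def
proof (intro allI impI ballI)
  fix c :: "nat list \<Rightarrow> rat" and E :: "nat list set" and e
  let ?vs = "[var_u, var_v, var_w]"
  assume h: "finite E \<and> (\<forall>e\<in>E. length e = length ?vs) \<and>
      (\<Sum>e\<in>E. ratK (c e) * (\<Prod>i<length ?vs. (?vs ! i) ^ (e ! i))) = 0" and "e \<in> E"
  then have fin: "finite E" and len: "\<And>e. e \<in> E \<Longrightarrow> length e = 3" by auto
  define T where "T = (\<Sum>e\<in>E. [:[:[:c e:]:]:] * monom3 (e!0) (e!1) (e!2))"
  have term_eq: "ratK (c e) * (\<Prod>i<length ?vs. (?vs ! i) ^ (e ! i))
      = Fract ([:[:[:c e:]:]:] * monom3 (e!0) (e!1) (e!2)) 1" for e
    by (simp add: ratK_def vars_eq_monom3 Fract_power monom3_power monom3_mult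
        numeral_3_eq_3 numeral_2_eq_2 lessThan_Suc)
  have "Fract T 1 = 0"
    using h unfolding T_def term_eq by (simp add: sum_Fract_same_denom[OF _ fin])
  then have T0: "T = 0" by (simp add: Fract_eq_0_iff_numerator)
  have same_exps: "(e'!0 = e!0 \<and> e'!1 = e!1 \<and> e'!2 = e!2) \<longleftrightarrow> e' = e" if "e' \<in> E" for e'
    using len[OF that] len[OF \<open>e \<in> E\<close>] by (auto simp: numeral_3_eq_3 length_Suc_conv)
  have "coeff3 T (e!2) (e!1) (e!0) = (\<Sum>e'\<in>E. if e' = e then c e' else 0)"
    unfolding T_def coeff3_sum coeff3_smult_monom3 by (rule sum.cong) (use same_exps in auto)
  also have "\<dots> = c e" using fin \<open>e \<in> E\<close> by simp
  finally show "c e = 0" using T0 by (simp add: coeff3_def)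
qed

section \<open>Four elements of \<open>\<rat>(u,v,w)\<close> are algebraically dependent\<close>

definition deg2_le :: "nat \<Rightarrow> 'a::comm_semiring_0 poly poly \<Rightarrow> bool" where
  "deg2_le K p \<longleftrightarrow> degree p \<le> K \<and> (\<forall>i. degree (coeff p i) \<le> K)"

definition deg3_le :: "nat \<Rightarrow> 'a::comm_semiring_0 poly poly poly \<Rightarrow> bool" where
  "deg3_le K p \<longleftrightarrow> degree p \<le> K \<and> (\<forall>i. deg2_le K (coeff p i))"

lemma deg2_le_mono: "deg2_le K p \<Longrightarrow> K \<le> L \<Longrightarrow> deg2_le L p"
  unfolding deg2_le_def by (meson order_trans)

lemma deg3_le_mono: "deg3_le K p \<Longrightarrow> K \<le> L \<Longrightarrow> deg3_le L p"
  unfolding deg3_le_def using deg2_le_mono by (meson order_trans)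

lemma deg2_le_sum: "finite A \<Longrightarrow> (\<And>x. x \<in> A \<Longrightarrow> deg2_le K (f x)) \<Longrightarrow> deg2_le K (sum f A)"
  unfolding deg2_le_def by (auto simp: coeff_sum intro!: degree_sum_le)

lemma deg3_le_sum: "finite A \<Longrightarrow> (\<And>x. x \<in> A \<Longrightarrow> deg3_le K (f x)) \<Longrightarrow> deg3_le K (sum f A)"
  unfolding deg3_le_def by (auto simp: coeff_sum intro!: degree_sum_le deg2_le_sum)

lemma deg2_le_mult:
  assumes "deg2_le a p" "deg2_le b q"
  shows "deg2_le (a + b) (p * q)"
  unfolding deg2_le_def
proof (intro conjI allI)
  show "degree (p * q) \<le> a + b"
    using assms degree_mult_le[of p q] unfolding deg2_le_def by linarith
  fix i
  have "degree (coeff p x * coeff q (i - x)) \<le> a + b" for x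
    using assms degree_mult_le[of "coeff p x" "coeff q (i - x)"] unfolding deg2_le_def
    by (meson add_mono order_trans)
  then show "degree (coeff (p * q) i) \<le> a + b"
    unfolding coeff_mult by (intro degree_sum_le) auto
qed

lemma deg3_le_mult:
  assumes "deg3_le a p" "deg3_le b q"
  shows "deg3_le (a + b) (p * q)"
  unfolding deg3_le_def
proof (intro conjI allI)
  show "degree (p * q) \<le> a + b"
    using assms degree_mult_le[of p q] unfolding deg3_le_def by linarith
  fix i
  show "deg2_le (a + b) (coeff (p * q) i)"
    using assms unfolding coeff_mult deg3_le_def by (intro deg2_le_sum deg2_le_mult) auto
qed

lemma deg3_le_one: "deg3_le 0 (1 :: 'a::comm_semiring_1 poly poly poly)"
  unfolding deg3_le_def deg2_le_def by (auto simp: coeff_1)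

lemma deg3_le_const: "deg3_le 0 [:[:[:c:]:]:]"
  unfolding deg3_le_def deg2_le_def by (auto simp: coeff_pCons split: nat.splits)

lemma deg3_le_prod:
  "finite A \<Longrightarrow> (\<And>x. x \<in> A \<Longrightarrow> deg3_le (k x) (f x)) \<Longrightarrow> deg3_le (sum k A) (prod f A)"
  by (induction A rule: finite_induct) (simp_all add: deg3_le_mult deg3_le_one)

lemma deg3_le_power: "deg3_le K p \<Longrightarrow> deg3_le (n * K) (p ^ n)"
  using deg3_le_prod[of "{..<n}" "\<lambda>_. K" "\<lambda>_. p"] by simp

lemma deg2_le_exists: "\<exists>K. deg2_le K p"
proof -
  define K where "K = degree p + (\<Sum>i\<le>degree p. degree (coeff p i))"
  have "degree (coeff p i) \<le> K" for i
  proof (cases "i \<le> degree p")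
    case True
    then have "degree (coeff p i) \<le> (\<Sum>i\<le>degree p. degree (coeff p i))"
      by (intro member_le_sum) auto
    then show ?thesis unfolding K_def by linarith
  qed (simp add: coeff_eq_0)
  then have "deg2_le K p" unfolding deg2_le_def K_def by auto
  then show ?thesis ..
qed

lemma deg3_le_exists: "\<exists>K. deg3_le K p"
proof -
  have "\<forall>i. \<exists>K. deg2_le K (coeff p i)" using deg2_le_exists by blast
  then obtain B where B: "\<And>i. deg2_le (B i) (coeff p i)" by metis
  define K where "K = degree p + (\<Sum>i\<le>degree p. B i)"
  have "deg2_le K (coeff p i)" for i
  proof (cases "i \<le> degree p")
    case True
    then have "B i \<le> (\<Sum>i\<le>degree p. B i)" by (intro member_le_sum) auto
    then have "B i \<le> K" unfolding K_def by linarith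
    then show ?thesis using B deg2_le_mono by blast
  qed (simp add: coeff_eq_0 deg2_le_def)
  then have "deg3_le K p" unfolding deg3_le_def K_def by auto
  then show ?thesis ..
qed

lemma deg3_le_eq_0:
  assumes "deg3_le K p" and "\<And>i j k. i \<le> K \<Longrightarrow> j \<le> K \<Longrightarrow> k \<le> K \<Longrightarrow> coeff3 p i j k = 0"
  shows "p = 0"
proof (intro poly_eqI)
  fix i j k
  from assms(1) have "coeff (coeff (coeff p i) j) k = 0" if "\<not> (i \<le> K \<and> j \<le> K \<and> k \<le> K)"
    using that unfolding deg3_le_def deg2_le_def by (metis coeff_0 coeff_eq_0 le_less_trans not_le)
  with assms(2)[of i j k] show "coeff (coeff (coeff p i) j) k = coeff (coeff (coeff 0 i) j) k"
    unfolding coeff3_def by auto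
qed

lemma homogeneous_system_nontrivial_solution:
  fixes v :: "'e \<Rightarrow> 'i \<Rightarrow> 'a::field"
  assumes "finite I" "finite E" "card I < card E"
  shows "\<exists>c. (\<exists>e\<in>E. c e \<noteq> 0) \<and> (\<forall>i\<in>I. (\<Sum>e\<in>E. c e * v e i) = 0)"
  using assms
proof (induction I arbitrary: E v rule: finite_induct)
  case empty
  then obtain e where "e \<in> E" by (metis card.empty card_ge_0_finite ex_in_conv less_irrefl_nat card_eq_0_iff)
  then show ?case by (intro exI[of _ "\<lambda>_. 1"]) auto
next
  case (insert i0 I)
  show ?case
  proof (cases "\<forall>e\<in>E. v e i0 = 0")
    case True
    have "card I < card E" using insert by simp
    then obtain c where c: "\<exists>e\<in>E. c e \<noteq> 0" "\<forall>i\<in>I. (\<Sum>e\<in>E. c e * v e i) = 0"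
      using insert.IH[OF insert.prems(1)] by blast
    then show ?thesis using True by (intro exI[of _ c]) auto
  next
    case False
    then obtain e0 where e0: "e0 \<in> E" "v e0 i0 \<noteq> 0" by blast
    text \<open>Eliminate the \<open>i0\<close>-th equation using the pivot \<open>v e0 i0\<close>.\<close>
    define E' where "E' = E - {e0}"
    define w where "w e i = v e i - (v e i0 / v e0 i0) * v e0 i" for e i
    have fE': "finite E'" using insert by (simp add: E'_def)
    have "card E' = card E - 1" using e0 insert by (simp add: E'_def)
    then have "card I < card E'" using insert by simp
    then obtain c' where c': "\<exists>e\<in>E'. c' e \<noteq> 0" "\<forall>i\<in>I. (\<Sum>e\<in>E'. c' e * w e i) = 0"
      using insert.IH[OF fE'] by blast
    define a where "a = - (\<Sum>e\<in>E'. c' e * v e i0) / v e0 i0"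
    define c where "c e = (if e = e0 then a else c' e)" for e
    have split: "(\<Sum>e\<in>E. c e * v e i) = a * v e0 i + (\<Sum>e\<in>E'. c' e * v e i)" for i
    proof -
      have "(\<Sum>e\<in>E. c e * v e i) = c e0 * v e0 i + (\<Sum>e\<in>E'. c e * v e i)"
        unfolding E'_def using e0 insert by (simp add: sum.remove)
      also have "(\<Sum>e\<in>E'. c e * v e i) = (\<Sum>e\<in>E'. c' e * v e i)"
        by (rule sum.cong) (auto simp: c_def E'_def)
      finally show ?thesis by (simp add: c_def)
    qed
    have eliminated: "(\<Sum>e\<in>E'. c' e * w e i) = (\<Sum>e\<in>E'. c' e * v e i) + a * v e0 i" for i
    proof -
      have "(\<Sum>e\<in>E'. c' e * w e i) = (\<Sum>e\<in>E'. c' e * v e i - (c' e * v e i0) * (v e0 i / v e0 i0))"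
        unfolding w_def by (rule sum.cong) (auto simp: algebra_simps)
      also have "\<dots> = (\<Sum>e\<in>E'. c' e * v e i) - (\<Sum>e\<in>E'. c' e * v e i0) * (v e0 i / v e0 i0)"
        by (simp add: sum_subtractf sum_distrib_right sum_divide_distrib)
      finally show ?thesis unfolding a_def by (simp add: field_simps)
    qed
    show ?thesis
    proof (intro exI[of _ c] conjI ballI)
      show "\<exists>e\<in>E. c e \<noteq> 0" using c' by (auto simp: c_def E'_def)
      fix i assume "i \<in> insert i0 I"
      then consider "i = i0" | "i \<in> I" by blast
      then show "(\<Sum>e\<in>E. c e * v e i) = 0"
      proof cases
        case 1 then show ?thesis unfolding split using e0 by (simp add: a_def)
      next
        case 2 then show ?thesis unfolding split using c'(2) eliminated by (simp add: add.commute)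
      qed
    qed
  qed
qed

lemma Fract_pad_denom:
  assumes "b \<noteq> 0" "e \<le> N"
  shows "Fract (a ^ e) (b ^ e) = Fract (a ^ e * b ^ (N - e)) (b ^ N)"
proof -
  have "a ^ e * b ^ N = a ^ e * b ^ (N - e) * b ^ e" using assms(2)
    by (simp add: mult.assoc power_add[symmetric])
  then show ?thesis using assms by (simp add: eq_fract)
qed

lemma fract_reprs_with_common_degree_bound:
  fixes a :: "nat \<Rightarrow> ratfun3"
  obtains g D d where "\<And>i. a i = Fract (g i) (D i)" "\<And>i. D i \<noteq> 0"
    "\<And>i. i < n \<Longrightarrow> deg3_le d (g i)" "\<And>i. i < n \<Longrightarrow> deg3_le d (D i)"
proof -
  have "\<forall>i. \<exists>g D. a i = Fract g D \<and> D \<noteq> 0" by (metis Fract_cases)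
  then obtain g D where gD: "\<And>i. a i = Fract (g i) (D i)" "\<And>i. D i \<noteq> 0" by metis
  have "\<forall>i. \<exists>K. deg3_le K (g i)" "\<forall>i. \<exists>K. deg3_le K (D i)" using deg3_le_exists by blast+
  then obtain K1 K2 where K: "\<And>i. deg3_le (K1 i) (g i)" "\<And>i. deg3_le (K2 i) (D i)" by metis
  define d where "d = (\<Sum>i<n. K1 i + K2 i)"
  have "K1 i + K2 i \<le> d" if "i < n" for i unfolding d_def using that by (intro member_le_sum) auto
  then have "K1 i \<le> d" "K2 i \<le> d" if "i < n" for i using that by fastforce+
  with K show thesis by (intro that[OF gD]) (blast intro: deg3_le_mono)+
qed

lemma monomial_common_denominator:
  assumes "\<And>i. a i = Fract (g i) (D i)" "\<And>i. D i \<noteq> 0"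
    "\<And>i. i < n \<Longrightarrow> deg3_le d (g i)" "\<And>i. i < n \<Longrightarrow> deg3_le d (D i)"
    and e: "\<And>i. i < n \<Longrightarrow> e ! i \<le> N"
  defines "num \<equiv> \<Prod>i<n. g i ^ (e ! i) * D i ^ (N - e ! i)"
  shows "(\<Prod>i<n. a i ^ (e ! i)) = Fract num (\<Prod>i<n. D i ^ N)" "deg3_le (n * (N * d)) num"
proof -
  have "(\<Prod>i<n. a i ^ (e ! i)) = (\<Prod>i<n. Fract (g i ^ (e!i) * D i ^ (N - e!i)) (D i ^ N))"
    by (rule prod.cong) (simp_all add: assms(1,2) e Fract_power Fract_pad_denom)
  then show "(\<Prod>i<n. a i ^ (e ! i)) = Fract num (\<Prod>i<n. D i ^ N)"
    unfolding num_def by (simp add: Fract_prod)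
  have "deg3_le (e!i * d + (N - e!i) * d) (g i ^ (e!i) * D i ^ (N - e!i))" if "i < n" for i
    using that assms(3,4) by (intro deg3_le_mult deg3_le_power)
  moreover have "e!i * d + (N - e!i) * d = N * d" if "i < n" for i
    using e[OF that] by (simp add: add_mult_distrib[symmetric])
  ultimately have "deg3_le (\<Sum>i<n. N * d) num" unfolding num_def by (intro deg3_le_prod) auto
  then show "deg3_le (n * (N * d)) num" by simp
qed

lemma monomials_outnumber_coefficients:
  fixes n d :: nat
  assumes "n \<ge> 4"
  defines "N \<equiv> (n * d + 1) ^ 3"
  shows "(n * (N * d) + 1) ^ 3 < (N + 1) ^ n"
proof -
  have "n * (N * d) + 1 \<le> N * (n * d + 1)" using N_def by (simp add: algebra_simps)
  then have "(n * (N * d) + 1) ^ 3 \<le> (N * (n * d + 1)) ^ 3" by (rule power_mono) simp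
  also have "\<dots> = N ^ 3 * (n * d + 1) ^ 3" by (rule power_mult_distrib)
  also have "\<dots> = N ^ 3 * N" by (simp add: N_def)
  also have "\<dots> = N ^ 4" by (simp add: numeral_eq_Suc flip: power_Suc2)
  also have "\<dots> < (N + 1) ^ 4" by (rule power_strict_mono) auto
  also have "\<dots> \<le> (N + 1) ^ n" by (rule power_increasing) (use assms in auto)
  finally show ?thesis .
qed

lemma length_le_3_if_alg_indep:
  assumes indep: "alg_indep as"
  shows "length as \<le> 3"
proof (rule ccontr)
  define n where "n = length as"
  assume "\<not> length as \<le> 3"
  then have "n \<ge> 4" unfolding n_def by simp
  obtain g D d where repr: "\<And>i. as ! i = Fract (g i) (D i)" "\<And>i. D i \<noteq> 0"
    "\<And>i. i < n \<Longrightarrow> deg3_le d (g i)" "\<And>i. i < n \<Longrightarrow> deg3_le d (D i)"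
    by (rule fract_reprs_with_common_degree_bound[of "(!) as" n]) blast
  define N where "N = (n * d + 1) ^ 3"
  define K where "K = n * (N * d)"
  define E where "E = {e. set e \<subseteq> {0..N} \<and> length e = n}"
  define I where "I = {0..K} \<times> {0..K} \<times> {0..K}"
  define num where "num e = (\<Prod>i<n. g i ^ (e ! i) * D i ^ (N - e ! i))" for e
  define den where "den = (\<Prod>i<n. D i ^ N)"
  have "den \<noteq> 0" unfolding den_def using repr(2) by simp
  have "finite E" unfolding E_def by (rule finite_lists_length_eq) simp
  have "finite I" unfolding I_def by simp
  have "card I = (K + 1) ^ 3" unfolding I_def by (simp add: card_cartesian_product power3_eq_cube)
  moreover have "card E = (N + 1) ^ n" unfolding E_def by (subst card_lists_length_eq) simp_all
  ultimately have "card I < card E"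
    unfolding K_def N_def by (simp only: monomials_outnumber_coefficients[OF \<open>n \<ge> 4\<close>])
  have exps: "e ! i \<le> N" if "e \<in> E" "i < n" for e i
    using that unfolding E_def by (auto simp: set_conv_nth)
  have mono: "(\<Prod>i<n. (as ! i) ^ (e ! i)) = Fract (num e) den" "deg3_le K (num e)" if "e \<in> E" for e
    using monomial_common_denominator[of "(!) as" g D n d e N, OF repr exps[OF that]]
    unfolding num_def den_def K_def by simp_all
  obtain c where c: "\<exists>e\<in>E. c e \<noteq> 0"
    "\<forall>x\<in>I. (\<Sum>e\<in>E. c e * (\<lambda>(i, j, k). coeff3 (num e) i j k) x) = 0"
    using homogeneous_system_nontrivial_solution[OF \<open>finite I\<close> \<open>finite E\<close> \<open>card I < card E\<close>,
        of "\<lambda>e (i, j, k). coeff3 (num e) i j k"]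
    by (elim exE conjE) (rule that)
  define T where "T = (\<Sum>e\<in>E. [:[:[:c e:]:]:] * num e)"
  have "T = 0"
  proof (rule deg3_le_eq_0)
    have "deg3_le K ([:[:[:c e:]:]:] * num e)" if "e \<in> E" for e
      using deg3_le_mult[OF deg3_le_const mono(2)[OF that]] by simp
    then show "deg3_le K T" unfolding T_def by (intro deg3_le_sum[OF \<open>finite E\<close>])
    fix i j k assume "i \<le> K" "j \<le> K" "k \<le> K"
    then have "(i, j, k) \<in> I" unfolding I_def by simp
    have "coeff3 T i j k = (\<Sum>e\<in>E. c e * coeff3 (num e) i j k)"
      unfolding T_def coeff3_sum coeff3_smult_const ..
    also have "\<dots> = 0" using bspec[OF c(2) \<open>(i, j, k) \<in> I\<close>] by simp
    finally show "coeff3 T i j k = 0" .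
  qed
  have "(\<Sum>e\<in>E. ratK (c e) * (\<Prod>i<length as. (as ! i) ^ (e ! i)))
      = (\<Sum>e\<in>E. Fract ([:[:[:c e:]:]:] * num e) den)"
    by (rule sum.cong) (simp_all only: n_def[symmetric] mono(1) ratK_def mult_fract mult_1)
  also have "\<dots> = Fract T den" unfolding T_def by (rule sum_Fract_same_denom) fact+
  also have "\<dots> = 0" using \<open>T = 0\<close> \<open>den \<noteq> 0\<close> by (simp add: Fract_eq_0_iff_numerator)
  finally have "(\<Sum>e\<in>E. ratK (c e) * (\<Prod>i<length as. (as ! i) ^ (e ! i))) = 0" .
  moreover have "\<forall>e\<in>E. length e = length as" unfolding E_def n_def by simp
  ultimately have "\<forall>e\<in>E. c e = 0" using indep \<open>finite E\<close> unfolding alg_indep_def by blast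
  with c(1) show False by blast
qed

lemma trdeg_eq_3_if_vars_mem:
  assumes "var_u \<in> F" "var_v \<in> F" "var_w \<in> F"
  shows "trdeg_eq F 3"
  unfolding trdeg_eq_def using assms alg_indep_vars length_le_3_if_alg_indep
  by (intro conjI exI[of _ "[var_u, var_v, var_w]"]) auto

theorem theorem2:
  shows "\<exists>x y z p q r :: ratfun3.
           tri x + tri y = tri p \<and> tri y + tri z = tri q \<and> tri z + tri x = tri r \<and>
           trdeg_eq (gen_subfield {x, y, z, p, q, r}) 3"
proof (intro exI conjI)
  let ?S = "{half_pred X_uvw, half_pred Y_uvw, half_pred Z_uvw,
             half_pred P_uvw, half_pred Q_uvw, half_pred R_uvw}"
  show "tri (half_pred X_uvw) + tri (half_pred Y_uvw) = tri (half_pred P_uvw)"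
       "tri (half_pred Y_uvw) + tri (half_pred Z_uvw) = tri (half_pred Q_uvw)"
       "tri (half_pred Z_uvw) + tri (half_pred X_uvw) = tri (half_pred R_uvw)"
    by (fact tri_system_uvw)+
  show "trdeg_eq (gen_subfield ?S) 3"
    using vars_in_gen_subfield_solution[OF subset_gen_subfield is_subfield_gen_subfield]
    by (rule trdeg_eq_3_if_vars_mem)
qed

end
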